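(* Let $\Sigma$ be a finite alphabet and $S=s_0\cdots s_{m-1}\in\Sigma^m$. Then the set $\mathrm{Sub}(S)$ of all substrings of $S$, including the empty string $\varepsilon$, is a set of window representatives of length $m$.
   Context: For a finite set $\mathcal{R}\subset\Sigma^*$ and $a\in\Sigma^m$, $\mathrm{rep}_\mathcal{R}(a)$ denotes the longest suffix of $a$ (suffixes include $\varepsilon$ and $a$ itself) lying in $\mathcal{R}$. $\mathcal{R}$ is a set of window representatives of length $m$ if (1) every $a\in\Sigma^m$ has a suffix in $\mathcal{R}$ (so $\mathrm{rep}_\mathcal{R}$ is well defined on $\Sigma^m$), and (2) there exists a function $\delta_\mathcal{R}:\mathcal{R}\times\Sigma\to\mathcal{R}$ with $\delta_\mathcal{R}(\mathrm{rep}_\mathcal{R}(a),\sigma)=\mathrm{rep}_\mathcal{R}(a_1\cdots a_{m-1}\sigma)$ for all $a=a_0\cdots a_{m-1}\in\Sigma^m$ and $\sigma\in\Sigma$. *)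

theory Defs
  imports Main "HOL-Library.Sublist"
begin

text \<open>Suffixes (including the empty word and the word itself) are
  given by the library predicate suffix; substrings (contiguous factors) by sublist.\<close>

definition words_of_length :: "'a set \<Rightarrow> nat \<Rightarrow> 'a list set" where
  "words_of_length Alph m = {a. length a = m \<and> set a \<subseteq> Alph}"

definition rep :: "'a list set \<Rightarrow> 'a list \<Rightarrow> 'a list" where
  "rep R a = (THE u. suffix u a \<and> u \<in> R \<and>
                  (\<forall>v. suffix v a \<and> v \<in> R \<longrightarrow> length v \<le> length u))"

text \<open>Set of window representatives of length m over alphabet Alph.
  The window a_1 ... a_(m-1) sigma of a = a_0 ... a_(m-1) is tl a @ [sigma].\<close>
definition window_reps :: "'a set \<Rightarrow> nat \<Rightarrow> 'a list set \<Rightarrow> bool" where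
  "window_reps Alph m R \<longleftrightarrow>
     finite R \<and> R \<subseteq> lists Alph \<and>
     (\<forall>a \<in> words_of_length Alph m. \<exists>u. suffix u a \<and> u \<in> R) \<and>
     (\<exists>delta :: 'a list \<Rightarrow> 'a \<Rightarrow> 'a list.
        (\<forall>r \<in> R. \<forall>\<sigma> \<in> Alph. delta r \<sigma> \<in> R) \<and>
        (\<forall>a \<in> words_of_length Alph m. \<forall>\<sigma> \<in> Alph.
            delta (rep R a) \<sigma> = rep R (tl a @ [\<sigma>])))"

definition Sub :: "'a list \<Rightarrow> 'a list set" where
  "Sub S = {u. sublist u S}"

end

theory Submission
  imports Defs
begin

text \<open>Let R contain \<open>[]\<close>, be closed under deleting the last letter, and contain no word
  longer than m. The longest suffix in R of \<open>tl a @ [\<sigma>]\<close> is either \<open>[]\<close> or \<open>v @ [\<sigma>]\<close>,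
  where v is a suffix of \<open>tl a\<close> lying in R and hence a suffix of \<open>rep R a\<close>; conversely a
  suffix of \<open>rep R a\<close> shorter than m is a suffix of \<open>tl a\<close>. So \<open>\<delta> r \<sigma> = rep R (r @ [\<sigma>])\<close>
  is a transition function, and Sub S has these properties.\<close>

lemma rep_eqI:
  assumes "suffix u x" "u \<in> R" "\<And>v. suffix v x \<Longrightarrow> v \<in> R \<Longrightarrow> length v \<le> length u"
  shows "rep R x = u"
  unfolding rep_def
proof (rule the_equality)
  show "suffix u x \<and> u \<in> R \<and> (\<forall>v. suffix v x \<and> v \<in> R \<longrightarrow> length v \<le> length u)"
    using assms by blast
next
  fix w
  assume w: "suffix w x \<and> w \<in> R \<and> (\<forall>v. suffix v x \<and> v \<in> R \<longrightarrow> length v \<le> length w)"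
  with assms have "length w = length u" by (meson le_antisym)
  with w assms(1) show "w = u"
    by (metis suffix_length_suffix suffix_order.antisym order_refl)
qed

lemma rep_longest_suffix:
  assumes "suffix u x" "u \<in> R"
  shows rep_suffix: "suffix (rep R x) x"
    and rep_mem: "rep R x \<in> R"
    and rep_longest: "\<And>v. suffix v x \<Longrightarrow> v \<in> R \<Longrightarrow> length v \<le> length (rep R x)"
proof -
  let ?P = "\<lambda>u. suffix u x \<and> u \<in> R"
  have "\<exists>w. ?P w \<and> (\<forall>v. ?P v \<longrightarrow> length v \<le> length w)"
  proof (rule ex_has_greatest_nat[where k = u and b = "Suc (length x)"])
    show "?P u" using assms by blast
    show "\<forall>v. ?P v \<longrightarrow> length v < Suc (length x)"
      by (auto simp: less_Suc_eq_le dest: suffix_length_le)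
  qed
  then obtain w where w: "?P w" "\<And>v. ?P v \<Longrightarrow> length v \<le> length w" by blast
  then have "rep R x = w" by (intro rep_eqI) auto
  with w show "suffix (rep R x) x" "rep R x \<in> R"
    "\<And>v. suffix v x \<Longrightarrow> v \<in> R \<Longrightarrow> length v \<le> length (rep R x)" by auto
qed

lemma rep_cong:
  "(\<And>v. v \<in> R \<Longrightarrow> suffix v x \<longleftrightarrow> suffix v y) \<Longrightarrow> rep R x = rep R y"
  unfolding rep_def by metis

lemma rep_snoc_rep:
  assumes Nil: "[] \<in> R"
    and short: "\<forall>v \<in> R. length v \<le> length a"
    and butlast_closed: "\<And>v \<sigma>. v @ [\<sigma>] \<in> R \<Longrightarrow> v \<in> R"
  shows "rep R (rep R a @ [\<sigma>]) = rep R (tl a @ [\<sigma>])"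
proof (rule rep_cong)
  let ?u = "rep R a"
  have u_suffix: "suffix ?u a" and u_longest: "\<And>v. suffix v a \<Longrightarrow> v \<in> R \<Longrightarrow> length v \<le> length ?u"
    using rep_longest_suffix[OF suffix_bot.extremum Nil] by auto
  fix v
  assume v: "v \<in> R"
  show "suffix v (?u @ [\<sigma>]) \<longleftrightarrow> suffix v (tl a @ [\<sigma>])"
  proof (cases v rule: rev_cases)
    case (snoc v' \<tau>)
    have "suffix v' ?u \<longleftrightarrow> suffix v' (tl a)"
    proof
      assume "suffix v' ?u"
      then have "suffix v' a" using u_suffix by (rule suffix_order.order_trans)
      moreover have "length v' \<le> length (tl a)"
        using short v snoc by auto
      ultimately show "suffix v' (tl a)"
        using suffix_length_suffix suffix_tl by blast
    next
      assume "suffix v' (tl a)"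
      then have "suffix v' a" using suffix_tl suffix_order.order_trans by blast
      moreover have "v' \<in> R" using butlast_closed v snoc by blast
      ultimately show "suffix v' ?u"
        using u_longest u_suffix suffix_length_suffix by blast
    qed
    then show ?thesis using snoc by simp
  qed simp
qed

lemma window_reps_if_butlast_closed:
  assumes "finite R" "R \<subseteq> lists Alph" "[] \<in> R"
    and "\<forall>v \<in> R. length v \<le> m"
    and "\<And>v \<sigma>. v @ [\<sigma>] \<in> R \<Longrightarrow> v \<in> R"
  shows "window_reps Alph m R"
  unfolding window_reps_def
proof (intro conjI exI[of _ "\<lambda>r \<sigma>. rep R (r @ [\<sigma>])"])
  show "\<forall>a \<in> words_of_length Alph m. \<exists>u. suffix u a \<and> u \<in> R"
    using assms(3) suffix_bot.extremum by blast
  show "\<forall>r \<in> R. \<forall>\<sigma> \<in> Alph. rep R (r @ [\<sigma>]) \<in> R"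
    using rep_mem[OF suffix_bot.extremum assms(3)] by blast
  show "\<forall>a \<in> words_of_length Alph m. \<forall>\<sigma> \<in> Alph. rep R (rep R a @ [\<sigma>]) = rep R (tl a @ [\<sigma>])"
    using assms(3-5) by (auto simp: words_of_length_def intro: rep_snoc_rep)
qed (use assms in auto)

lemma finite_Sub: "finite (Sub S)"
  unfolding Sub_def by (metis List.finite_set set_sublists_eq)

lemma Sub_subset_lists: "set S \<subseteq> Alph \<Longrightarrow> Sub S \<subseteq> lists Alph"
  by (auto simp: Sub_def dest: set_mono_sublist)

lemma Nil_in_Sub: "[] \<in> Sub S"
  by (simp add: Sub_def)

lemma length_le_of_Sub: "v \<in> Sub S \<Longrightarrow> length v \<le> length S"
  by (simp add: Sub_def sublist_length_le)

lemma Sub_butlast_closed: "v @ [\<sigma>] \<in> Sub S \<Longrightarrow> v \<in> Sub S"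
  by (auto simp: Sub_def intro: sublist_order.order_trans sublist_appendI)

theorem lemma16:
  fixes Alph :: "'a set" and S :: "'a list" and m :: nat
  assumes "finite Alph"
    and "S \<in> words_of_length Alph m"
  shows "window_reps Alph m (Sub S)"
proof (rule window_reps_if_butlast_closed)
  from assms(2) have "length S = m" "set S \<subseteq> Alph"
    by (auto simp: words_of_length_def)
  then show "Sub S \<subseteq> lists Alph" "\<forall>v \<in> Sub S. length v \<le> m"
    by (auto simp: Sub_subset_lists dest: length_le_of_Sub)
qed (auto simp: finite_Sub Nil_in_Sub intro: Sub_butlast_closed)

end
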